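(* Let $P$ and $Q$ be probability measures such that $\frac{\mathrm dP}{\mathrm dQ}\le R$ and $\frac{\mathrm dQ}{\mathrm dP}\le R$ hold uniformly over the probability space. Then \[ \max\{2-0.5\log R,\ 1\}\cdot\mathsf{Hel}_{1/2}(P\|Q)\le\mathsf{KL}(P\|Q)\le(2+\log R)\cdot\mathsf{Hel}_{1/2}(P\|Q). \] Furthermore, if $R\le4.5$, then \[ (2-0.4\log R)\cdot\mathsf{Hel}_{1/2}(P\|Q)\le\mathsf{KL}(P\|Q)\le(2+0.4\log R)\cdot\mathsf{Hel}_{1/2}(P\|Q). \]
   Context: $\mathsf{KL}(P\|Q)=\int\mathrm dP\log\frac{\mathrm dP}{\mathrm dQ}$ (natural logarithm) and $\mathsf{Hel}_{1/2}(P\|Q)=\int(\sqrt{\mathrm dP}-\sqrt{\mathrm dQ})^2=2-2\int\sqrt{\mathrm dP\,\mathrm dQ}$ (unnormalized squared Hellinger distance). *)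

theory Defs
  imports "HOL-Probability.Probability"
begin

text \<open>Unnormalized squared Hellinger distance Hel_{1/2}(P||Q) = 2 - 2 * integral of sqrt(dP dQ).
  For P absolutely continuous w.r.t. Q, the integral of sqrt(dP dQ) equals the Q-integral of
  sqrt(dP/dQ).\<close>
definition hellinger :: "'a measure \<Rightarrow> 'a measure \<Rightarrow> real" where
  "hellinger P Q = 2 - 2 * (\<integral>x. sqrt (enn2real (RN_deriv Q P x)) \<partial>Q)"

text \<open>KL(P||Q) with natural logarithm; library convention: KL_divergence b M N = KL(N||M).\<close>
definition KL :: "'a measure \<Rightarrow> 'a measure \<Rightarrow> real" where
  "KL P Q = KL_divergence (exp 1) Q P"

end

theory Submission
  imports Defs
begin

text \<open>Write \<open>r = dP/dQ\<close> and \<open>t = sqrt r\<close>. Then \<open>KL(P\<parallel>Q) = E\<^sub>Q[r ln r - r + 1] = E\<^sub>Q[2 t\<^sup>2 ln t - t\<^sup>2 + 1]\<close>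
  and \<open>Hel(P\<parallel>Q) = E\<^sub>Q[(t - 1)\<^sup>2]\<close>, and the two density bounds confine \<open>t\<close> to
  \<open>\<bar>2 ln t\<bar> \<le> ln R\<close>. Both inequalities therefore follow by integrating pointwise bounds
  \<open>c (t - 1)\<^sup>2 \<le> 2 t\<^sup>2 ln t - t\<^sup>2 + 1 \<le> C (t - 1)\<^sup>2\<close>, each proved by showing that the difference
  is monotone on either side of \<open>t = 1\<close>. The constants \<open>2 \<plusminus> 0.4 ln R\<close> rest on rational bounds
  for \<open>ln\<close>: the Pade-type bound \<open>ln t \<le> 2 (t - 1)/(t + 1)\<close> for \<open>t \<le> 1\<close>, and a rational
  majorant that stays above \<open>ln\<close> only up to \<open>t = sqrt 4.5\<close>.\<close>

lemma ln_ge_one_minus_inverse: "0 < (t::real) \<Longrightarrow> 1 - 1/t \<le> ln t"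
  using ln_le_minus_one[of "1/t"] by (simp add: ln_div)

lemma diff_one_le_mult_ln:
  assumes "0 < (t::real)" shows "t - 1 \<le> t * ln t"
proof -
  have "t * (1 - 1/t) \<le> t * ln t"
    using assms ln_ge_one_minus_inverse[OF assms] by (intro mult_left_mono) auto
  moreover have "t * (1 - 1/t) = t - 1"
    using assms by (simp add: field_simps)
  ultimately show ?thesis by simp
qed

lemma ln_le_diff_div_add:
  assumes "0 < (t::real)" "t \<le> 1"
  shows "ln t \<le> 2 * (t - 1) / (t + 1)"
proof -
  let ?h = "\<lambda>x::real. ln x - 2 * (x - 1) / (x + 1)"
  have "?h t \<le> ?h 1"
  proof (rule DERIV_nonneg_imp_nondecreasing[OF assms(2)])
    fix x assume "t \<le> x" "x \<le> 1"
    with assms have x: "0 < x" by simp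
    have "DERIV ?h x :> 1/x - 4/(x + 1)^2"
      using x by (auto intro!: derivative_eq_intros simp: field_simps power2_eq_square)
    moreover have "1/x - 4/(x + 1)^2 = (x - 1)^2 / (x * (x + 1)^2)"
      using x by (simp add: field_simps) (simp add: algebra_simps power2_eq_square)
    ultimately show "\<exists>y. DERIV ?h x :> y \<and> 0 \<le> y"
      using x by auto
  qed
  then show ?thesis by simp
qed

lemma exp_ge_Taylor_partial_sum:
  assumes "0 \<le> (x::real)"
  shows "(\<Sum>n<N. x^n / fact n) \<le> exp x"
proof -
  have "(\<Sum>n<N. x^n /\<^sub>R fact n) \<le> (\<Sum>n. x^n /\<^sub>R fact n)"
    using assms by (intro sum_le_suminf[OF summable_exp_generic]) auto
  then show ?thesis
    by (simp add: exp_def divide_inverse mult.commute)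
qed

lemma ln_nine_halves_le: "ln (9/2::real) \<le> 3009/2000"
proof -
  have "(9/2::real) \<le> (\<Sum>n<9. (3009/2000)^n / fact n)"
    by (simp add: lessThan_nat_numeral fact_numeral power_divide)
  also have "\<dots> \<le> exp (3009/2000)"
    by (rule exp_ge_Taylor_partial_sum) simp
  finally show ?thesis
    by (metis exp_gt_zero ln_exp ln_le_cancel_iff zero_less_divide_iff zero_less_numeral)
qed

definition kl_sq :: "real \<Rightarrow> real" where
  "kl_sq t = 2 * t^2 * ln t - t^2 + 1"

lemma kl_sq_sqrt: "0 \<le> r \<Longrightarrow> kl_sq (sqrt r) = r * ln r - r + 1"
  by (cases "r = 0") (simp_all add: kl_sq_def ln_sqrt)

lemma sq_le_kl_sq:
  assumes "0 < t" shows "(t - 1)^2 \<le> kl_sq t"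
proof -
  have "t * (t - 1) \<le> t * (t * ln t)"
    using assms diff_one_le_mult_ln[OF assms] by (intro mult_left_mono) auto
  then show ?thesis
    by (simp add: kl_sq_def algebra_simps power2_eq_square)
qed

lemma DERIV_kl_sq_minus_two_sq:
  "0 < x \<Longrightarrow> DERIV (\<lambda>x. kl_sq x - 2 * (x - 1)^2) x :> 4 * (x * ln x - (x - 1))"
  unfolding kl_sq_def by (auto intro!: derivative_eq_intros simp: field_simps power2_eq_square)

lemma two_sq_le_kl_sq:
  assumes "1 \<le> t" shows "2 * (t - 1)^2 \<le> kl_sq t"
proof -
  have "kl_sq 1 - 2 * (1 - 1)^2 \<le> kl_sq t - 2 * (t - 1)^2"
  proof (rule DERIV_nonneg_imp_nondecreasing[OF assms])
    fix x :: real assume "1 \<le> x"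
    then show "\<exists>y. DERIV (\<lambda>x. kl_sq x - 2 * (x - 1)^2) x :> y \<and> 0 \<le> y"
      using DERIV_kl_sq_minus_two_sq[of x] diff_one_le_mult_ln[of x] by auto
  qed
  then show ?thesis by (simp add: kl_sq_def)
qed

lemma kl_sq_le_two_sq:
  assumes "0 < t" "t \<le> 1" shows "kl_sq t \<le> 2 * (t - 1)^2"
proof -
  have "kl_sq t - 2 * (t - 1)^2 \<le> kl_sq 1 - 2 * (1 - 1)^2"
  proof (rule DERIV_nonneg_imp_nondecreasing[OF assms(2)])
    fix x :: real assume "t \<le> x"
    then show "\<exists>y. DERIV (\<lambda>x. kl_sq x - 2 * (x - 1)^2) x :> y \<and> 0 \<le> y"
      using assms DERIV_kl_sq_minus_two_sq[of x] diff_one_le_mult_ln[of x] by auto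
  qed
  then show ?thesis by (simp add: kl_sq_def)
qed

lemma kl_sq_le_ln_sq:
  assumes "1 \<le> t" shows "kl_sq t \<le> (2 + 2 * ln t) * (t - 1)^2"
proof -
  let ?h = "\<lambda>x. (2 + 2 * ln x) * (x - 1)^2 - kl_sq x"
  have "?h 1 \<le> ?h t"
  proof (rule DERIV_nonneg_imp_nondecreasing[OF assms])
    fix x :: real assume x: "1 \<le> x"
    have "DERIV ?h x :> 2 * (x - 1)^2 / x + 4 * ((x - 1) - ln x)"
      using x unfolding kl_sq_def
      by (auto intro!: derivative_eq_intros simp: field_simps power2_eq_square)
    moreover have "0 \<le> 2 * (x - 1)^2 / x + 4 * ((x - 1) - ln x)"
      using ln_le_minus_one[of x] x by (intro add_nonneg_nonneg) auto
    ultimately show "\<exists>y. DERIV ?h x :> y \<and> 0 \<le> y" by auto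
  qed
  then show ?thesis by (simp add: kl_sq_def)
qed

lemma ln_sq_le_kl_sq:
  assumes "0 < t" "t \<le> 1" shows "(2 + 4/5 * ln t) * (t - 1)^2 \<le> kl_sq t"
proof -
  let ?h = "\<lambda>x. (2 + 4/5 * ln x) * (x - 1)^2 - kl_sq x"
  have "?h t \<le> ?h 1"
  proof (rule DERIV_nonneg_imp_nondecreasing[OF assms(2)])
    fix x :: real assume "t \<le> x" "x \<le> 1"
    with assms have x: "0 < x" "x \<le> 1" by auto
    let ?h' = "4/5 * (x - 1)^2 / x + 4 * (x - 1) - ln x * (12/5 * x + 8/5)"
    have "DERIV ?h x :> ?h'"
      using x unfolding kl_sq_def
      by (auto intro!: derivative_eq_intros simp: field_simps power2_eq_square)
    moreover have "ln x * (12/5 * x + 8/5) \<le> 2 * (x - 1) / (x + 1) * (12/5 * x + 8/5)"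
      using ln_le_diff_div_add[OF x] x by (intro mult_right_mono) auto
    moreover have "4/5 * (x - 1)^2 / x + 4 * (x - 1) - 2 * (x - 1) / (x + 1) * (12/5 * x + 8/5)
        = 4/5 * (x - 1)^2 / (x * (x + 1))"
      using x by (simp add: divide_simps) (simp add: algebra_simps power2_eq_square)
    moreover have "0 \<le> 4/5 * (x - 1)^2 / (x * (x + 1))"
      using x by simp
    ultimately show "\<exists>y. DERIV ?h x :> y \<and> 0 \<le> y"
      by (intro exI[of _ ?h']) linarith
  qed
  then show ?thesis by (simp add: kl_sq_def)
qed

text \<open>Chosen so that \<open>kl_sq t \<le> (2 + 4/5 ln t) (t - 1)\<^sup>2\<close> is equivalent to
  \<open>ln t \<le> ln_majorant t\<close> for \<open>t \<ge> 1\<close>.\<close>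

definition ln_majorant :: "real \<Rightarrow> real" where
  "ln_majorant x = 5 * (x - 1) * (3 * x - 1) / (2 * (3 * x^2 + 4 * x - 2))"

lemma ln_majorant_denom_pos: "1 \<le> (x::real) \<Longrightarrow> 0 < 3 * x^2 + 4 * x - 2"
  by (smt (verit) one_le_power)

lemma DERIV_ln_majorant_minus_ln:
  assumes "1 \<le> x"
  shows "DERIV (\<lambda>x. ln_majorant x - ln x) x
           :> (x - 1)^2 * (- 9 * x^2 + 18 * x - 4) / (x * (3 * x^2 + 4 * x - 2)^2)"
proof -
  let ?d = "3 * x^2 + 4 * x - 2"
  have d: "0 < ?d" "0 < x"
    using ln_majorant_denom_pos[OF assms] assms by auto
  have "DERIV (\<lambda>x. ln_majorant x - ln x) x :>
      ((5 * (3 * x - 1) + 5 * (x - 1) * 3) * (2 * ?d) - 5 * (x - 1) * (3 * x - 1) * (2 * (6 * x + 4)))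
        / (2 * ?d)^2 - 1/x"
    unfolding ln_majorant_def using d
    by (auto intro!: derivative_eq_intros simp: power2_eq_square field_simps)
  moreover have "((5 * (3 * x - 1) + 5 * (x - 1) * 3) * (2 * ?d) - 5 * (x - 1) * (3 * x - 1) * (2 * (6 * x + 4)))
        / (2 * ?d)^2 - 1/x = (x - 1)^2 * (- 9 * x^2 + 18 * x - 4) / (x * ?d^2)"
    using d by (simp add: divide_simps)
      (simp add: algebra_simps power2_eq_square power3_eq_cube power4_eq_xxxx)
  ultimately show ?thesis by simp
qed

lemma ln_le_ln_majorant_sqrt_nine_halves: "ln (sqrt (9/2)) \<le> ln_majorant (sqrt (9/2))"
proof -
  define c where "c = sqrt (9/2::real)"
  have c2: "c^2 = 9/2" and c0: "0 \<le> c"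
    unfolding c_def by simp_all
  have "c \<le> sqrt ((21215/10000)^2)"
    unfolding c_def by (rule real_sqrt_le_mono) (simp add: power2_eq_square)
  then have c_le: "c \<le> 21215/10000" by simp
  have "5 * (c - 1) * (3 * c - 1) = 5 * (29/2 - 4 * c)" "3 * c^2 + 4 * c - 2 = 23/2 + 4 * c"
    using c2 by (simp_all add: algebra_simps power2_eq_square)
  then have "ln_majorant c = 5 * (29/2 - 4 * c) / (2 * (23/2 + 4 * c))"
    unfolding ln_majorant_def by simp
  also have "3009/4000 \<le> \<dots>"
    using c0 c_le by (simp add: divide_simps)
  finally have "3009/4000 \<le> ln_majorant c" .
  moreover have "ln c \<le> 3009/4000"
    using ln_nine_halves_le unfolding c_def by (simp add: ln_sqrt)
  ultimately show ?thesis unfolding c_def by linarith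
qed

text \<open>\<open>ln_majorant - ln\<close> vanishes at 1 and first increases, then decreases, so only the endpoint
  \<open>sqrt (9/2)\<close> needs checking; there the margin is below \<open>10\<^sup>-\<^sup>3\<close>, which is why the sharper
  constant needs \<open>R \<le> 4.5\<close>.\<close>

lemma ln_le_ln_majorant:
  assumes t: "1 \<le> t" "t^2 \<le> 9/2"
  shows "ln t \<le> ln_majorant t"
proof -
  let ?g = "\<lambda>x. ln_majorant x - ln x" and ?p = "\<lambda>x::real. - 9 * x^2 + 18 * x - 4"
  have sign_g': "\<exists>y. DERIV ?g x :> y \<and> 0 \<le> y" if "1 \<le> x" "0 \<le> ?p x" for x
    using DERIV_ln_majorant_minus_ln[OF that(1)] that ln_majorant_denom_pos[OF that(1)] by auto
  have sign_g'_neg: "\<exists>y. DERIV (\<lambda>x. - ?g x) x :> y \<and> 0 \<le> y" if "1 \<le> x" "?p x \<le> 0" for x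
    using DERIV_minus[OF DERIV_ln_majorant_minus_ln[OF that(1)]] that ln_majorant_denom_pos[OF that(1)]
    by (auto intro!: exI divide_nonpos_pos mult_nonneg_nonpos)
  have p_diff: "?p x - ?p t = (t - x) * (9 * (x + t) - 18)" for x
    by (simp add: algebra_simps power2_eq_square)
  show ?thesis
  proof (cases "0 \<le> ?p t")
    case True
    have "?g 1 \<le> ?g t"
    proof (rule DERIV_nonneg_imp_nondecreasing[OF t(1)])
      fix x assume "1 \<le> x" "x \<le> t"
      moreover have "0 \<le> (t - x) * (9 * (x + t) - 18)"
        using calculation by (intro mult_nonneg_nonneg) auto
      ultimately have "0 \<le> ?p x" "1 \<le> x"
        using p_diff[of x] True by linarith+
      then show "\<exists>y. DERIV ?g x :> y \<and> 0 \<le> y"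
        by (rule sign_g'[rotated])
    qed
    then show ?thesis by (simp add: ln_majorant_def)
  next
    case False
    have "t \<le> sqrt (9/2)"
      using t by (simp add: real_le_rsqrt)
    then have "- ?g t \<le> - ?g (sqrt (9/2))"
    proof (rule DERIV_nonneg_imp_nondecreasing)
      fix x assume "t \<le> x"
      moreover have "(t - x) * (9 * (x + t) - 18) \<le> 0"
        using calculation t by (intro mult_nonpos_nonneg) auto
      ultimately have "?p x \<le> 0" "1 \<le> x"
        using p_diff[of x] False t by linarith+
      then show "\<exists>y. DERIV (\<lambda>x. - ?g x) x :> y \<and> 0 \<le> y"
        by (rule sign_g'_neg[rotated])
    qed
    then show ?thesis
      using ln_le_ln_majorant_sqrt_nine_halves by simp
  qed
qed

lemma kl_sq_le_ln_sq_small: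
  assumes "1 \<le> t" "t^2 \<le> 9/2" shows "kl_sq t \<le> (2 + 4/5 * ln t) * (t - 1)^2"
proof -
  let ?d = "3 * t^2 + 4 * t - 2"
  have d: "0 < ?d" using ln_majorant_denom_pos[OF assms(1)] .
  have "ln t * (2 * ?d) \<le> ln_majorant t * (2 * ?d)"
    using ln_le_ln_majorant[OF assms] d by (intro mult_right_mono) auto
  also have "\<dots> = 5 * (t - 1) * (3 * t - 1)"
    unfolding ln_majorant_def using d by simp
  finally have "ln t * (2 * ?d) \<le> 5 * (t - 1) * (3 * t - 1)" .
  moreover have "5 * ((2 + 4/5 * ln t) * (t - 1)^2 - kl_sq t)
      = 5 * (t - 1) * (3 * t - 1) - ln t * (2 * ?d)"
    unfolding kl_sq_def by (simp add: field_simps power2_eq_square)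
  ultimately have "0 \<le> 5 * ((2 + 4/5 * ln t) * (t - 1)^2 - kl_sq t)"
    by linarith
  then show ?thesis by simp
qed

lemma kl_sq_lower_bound:
  assumes "0 < t" "\<bar>2 * ln t\<bar> \<le> L"
  shows "(2 - 0.4 * L) * (t - 1)^2 \<le> kl_sq t"
proof (cases "1 \<le> t")
  case True
  have "(2 - 0.4 * L) * (t - 1)^2 \<le> 2 * (t - 1)^2"
    using assms(2) by (intro mult_right_mono) auto
  also have "\<dots> \<le> kl_sq t"
    using two_sq_le_kl_sq[OF True] .
  finally show ?thesis .
next
  case False
  have "(2 - 0.4 * L) * (t - 1)^2 \<le> (2 + 4/5 * ln t) * (t - 1)^2"
    using assms(2) by (intro mult_right_mono) auto
  also have "\<dots> \<le> kl_sq t"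
    using ln_sq_le_kl_sq[OF assms(1)] False by simp
  finally show ?thesis .
qed

lemma kl_sq_lower_bound_max:
  assumes "0 < t" "\<bar>2 * ln t\<bar> \<le> L"
  shows "max (2 - 0.5 * L) 1 * (t - 1)^2 \<le> kl_sq t"
proof -
  have "max (2 - 0.5 * L) 1 * (t - 1)^2 \<le> max (2 - 0.4 * L) 1 * (t - 1)^2"
    using assms(2) by (intro mult_right_mono) auto
  also have "\<dots> \<le> kl_sq t"
    using kl_sq_lower_bound[OF assms] sq_le_kl_sq[OF assms(1)] by (simp add: max_def)
  finally show ?thesis .
qed

lemma kl_sq_upper_bound:
  assumes "0 < t" "\<bar>2 * ln t\<bar> \<le> L"
  shows "kl_sq t \<le> (2 + L) * (t - 1)^2"
proof (cases "1 \<le> t")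
  case True
  have "kl_sq t \<le> (2 + 2 * ln t) * (t - 1)^2"
    using kl_sq_le_ln_sq[OF True] .
  also have "\<dots> \<le> (2 + L) * (t - 1)^2"
    using assms(2) by (intro mult_right_mono) auto
  finally show ?thesis .
next
  case False
  have "kl_sq t \<le> 2 * (t - 1)^2"
    using kl_sq_le_two_sq[OF assms(1)] False by simp
  also have "\<dots> \<le> (2 + L) * (t - 1)^2"
    using assms(2) by (intro mult_right_mono) auto
  finally show ?thesis .
qed

lemma kl_sq_upper_bound_small:
  assumes "0 < t" "\<bar>2 * ln t\<bar> \<le> L" "L \<le> ln (9/2)"
  shows "kl_sq t \<le> (2 + 0.4 * L) * (t - 1)^2"
proof (cases "1 \<le> t")
  case True
  have "ln (t^2) \<le> ln (9/2)"
    using assms by (simp add: ln_realpow)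
  then have "t^2 \<le> 9/2"
    using assms(1) by simp
  then have "kl_sq t \<le> (2 + 4/5 * ln t) * (t - 1)^2"
    using kl_sq_le_ln_sq_small[OF True] by simp
  also have "\<dots> \<le> (2 + 0.4 * L) * (t - 1)^2"
    using assms(2) by (intro mult_right_mono) auto
  finally show ?thesis .
next
  case False
  have "kl_sq t \<le> 2 * (t - 1)^2"
    using kl_sq_le_two_sq[OF assms(1)] False by simp
  also have "\<dots> \<le> (2 + 0.4 * L) * (t - 1)^2"
    using assms(2) by (intro mult_right_mono) auto
  finally show ?thesis .
qed

lemma ennreal_mult_eq_one_bounds:
  fixes a b :: ennreal
  assumes "a * b = 1" "a \<le> ennreal R" "b \<le> ennreal R"
  shows "1 \<le> R" "1/R \<le> enn2real a" "enn2real a \<le> R"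
proof -
  have "0 \<le> R"
  proof (rule ccontr)
    assume "\<not> 0 \<le> R"
    then have "a = 0" using assms(2) by (simp add: ennreal_neg)
    with assms(1) show False by simp
  qed
  define x y where "x = enn2real a" and "y = enn2real b"
  have "x * y = 1"
    using assms(1) unfolding x_def y_def by (metis enn2real_1 enn2real_mult)
  have "x \<le> R" "y \<le> R"
    using assms(2,3) \<open>0 \<le> R\<close> unfolding x_def y_def by (auto intro: enn2real_leI)
  have "0 \<le> x"
    unfolding x_def by simp
  have "1 \<le> x * R"
    using \<open>x * y = 1\<close> \<open>y \<le> R\<close> \<open>0 \<le> x\<close> by (metis mult_left_mono)
  with \<open>x \<le> R\<close> \<open>0 \<le> x\<close> show "1 \<le> R" "1/R \<le> enn2real a" "enn2real a \<le> R"
    unfolding x_def[symmetric] using \<open>0 \<le> R\<close>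
    by (smt (verit) mult_left_le, simp add: divide_le_eq, simp)
qed

locale bounded_likelihood_ratio =
  P: prob_space P + Q: prob_space Q for P Q :: "'a measure" +
  fixes R :: real
  assumes sets_eq: "sets P = sets Q"
    and ac_QP: "absolutely_continuous Q P"
    and ac_PQ: "absolutely_continuous P Q"
    and RN_deriv_QP_le: "AE x in Q. RN_deriv Q P x \<le> ennreal R"
    and RN_deriv_PQ_le: "AE x in P. RN_deriv P Q x \<le> ennreal R"
begin

definition dPdQ :: "'a \<Rightarrow> real" where
  "dPdQ x = enn2real (RN_deriv Q P x)"

lemma dPdQ_nonneg [simp]: "0 \<le> dPdQ x"
  by (simp add: dPdQ_def)

lemma borel_measurable_dPdQ [measurable]: "dPdQ \<in> borel_measurable Q"
  unfolding dPdQ_def by measurable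

lemma AE_RN_deriv_mult_eq_one: "AE x in Q. RN_deriv Q P x * RN_deriv P Q x = 1"
proof -
  have PQ_meas: "RN_deriv P Q \<in> borel_measurable Q"
    using borel_measurable_RN_deriv[of P Q] measurable_cong_sets[OF sets_eq refl] by blast
  have "density Q (\<lambda>x. RN_deriv Q P x * RN_deriv P Q x)
      = density (density Q (RN_deriv Q P)) (RN_deriv P Q)"
    using PQ_meas by (subst density_density_eq) auto
  also have "\<dots> = Q"
    unfolding Q.density_RN_deriv[OF ac_QP sets_eq]
    using P.density_RN_deriv[OF ac_PQ sets_eq[symmetric]] .
  also have "\<dots> = density Q (\<lambda>_. 1)"
    by (simp add: density_1)
  finally show ?thesis
    using PQ_meas by (intro Q.density_unique) auto
qed

lemma AE_dPdQ_bounds: "AE x in Q. 1 \<le> R \<and> 1/R \<le> dPdQ x \<and> dPdQ x \<le> R"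
proof -
  have "AE x in Q. RN_deriv P Q x \<le> ennreal R"
    using absolutely_continuous_AE[OF sets_eq[symmetric] ac_PQ RN_deriv_PQ_le] .
  with AE_RN_deriv_mult_eq_one RN_deriv_QP_le show ?thesis
    unfolding dPdQ_def by eventually_elim (use ennreal_mult_eq_one_bounds in blast)
qed

lemma R_ge_1: "1 \<le> R"
  using AE_dPdQ_bounds by (auto dest: AE_E)

lemma AE_ln_dPdQ_bound: "AE x in Q. 0 < dPdQ x \<and> \<bar>ln (dPdQ x)\<bar> \<le> ln R"
  using AE_dPdQ_bounds
proof eventually_elim
  case (elim x)
  then have "0 < dPdQ x"
    by (smt (verit) divide_pos_pos)
  moreover have "ln (1/R) \<le> ln (dPdQ x)" "ln (dPdQ x) \<le> ln R"
    using elim calculation by simp_all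
  ultimately show ?case
    using elim by (simp add: ln_div abs_le_iff)
qed

lemma integral_P_density: "f \<in> borel_measurable Q \<Longrightarrow> integral\<^sup>L P f = (\<integral>x. dPdQ x * f x \<partial>Q)"
  unfolding dPdQ_def using Q.RN_deriv_integral[OF P.sigma_finite_measure_axioms ac_QP sets_eq] by blast

lemma integral_dPdQ: "(\<integral>x. dPdQ x \<partial>Q) = 1"
  using integral_P_density[of "\<lambda>_. 1"] P.prob_space by simp

lemma integrable_dPdQ: "integrable Q dPdQ"
proof (rule Q.integrable_const_bound[where B = R])
  show "AE x in Q. norm (dPdQ x) \<le> R"
    using AE_dPdQ_bounds by eventually_elim auto
qed measurable

lemma integrable_sqrt_dPdQ: "integrable Q (\<lambda>x. sqrt (dPdQ x))"
proof (rule Q.integrable_const_bound[where B = "sqrt R"])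
  show "AE x in Q. norm (sqrt (dPdQ x)) \<le> sqrt R"
    using AE_dPdQ_bounds by eventually_elim auto
qed measurable

lemma integrable_dPdQ_ln: "integrable Q (\<lambda>x. dPdQ x * ln (dPdQ x))"
proof (rule Q.integrable_const_bound[where B = "R * ln R"])
  show "AE x in Q. norm (dPdQ x * ln (dPdQ x)) \<le> R * ln R"
    using AE_ln_dPdQ_bound AE_dPdQ_bounds
    by eventually_elim (auto simp: abs_mult intro: mult_mono)
qed measurable

lemma KL_eq_integral: "KL P Q = (\<integral>x. kl_sq (sqrt (dPdQ x)) \<partial>Q)"
proof -
  have "KL P Q = integral\<^sup>L P (entropy_density (exp 1) Q P)"
    unfolding KL_def KL_divergence_def ..
  also have "\<dots> = (\<integral>x. dPdQ x * ln (dPdQ x) \<partial>Q)"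
    by (subst integral_P_density) (auto simp: entropy_density_def dPdQ_def log_def)
  also have "\<dots> = (\<integral>x. dPdQ x * ln (dPdQ x) - dPdQ x + 1 \<partial>Q)"
    using integrable_dPdQ integrable_dPdQ_ln integral_dPdQ Q.prob_space
    by simp
  also have "\<dots> = (\<integral>x. kl_sq (sqrt (dPdQ x)) \<partial>Q)"
    by (simp add: kl_sq_sqrt)
  finally show ?thesis .
qed

lemma integrable_kl_sq_sqrt_dPdQ: "integrable Q (\<lambda>x. kl_sq (sqrt (dPdQ x)))"
proof -
  have "integrable Q (\<lambda>x. dPdQ x * ln (dPdQ x) - dPdQ x + 1)"
    using integrable_dPdQ integrable_dPdQ_ln by simp
  then show ?thesis
    by (simp add: kl_sq_sqrt)
qed

lemma hellinger_eq_integral: "hellinger P Q = (\<integral>x. (sqrt (dPdQ x) - 1)^2 \<partial>Q)"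
proof -
  have "(\<integral>x. (sqrt (dPdQ x) - 1)^2 \<partial>Q) = (\<integral>x. dPdQ x - 2 * sqrt (dPdQ x) + 1 \<partial>Q)"
    by (simp add: power2_eq_square algebra_simps)
  also have "\<dots> = 2 - 2 * (\<integral>x. sqrt (dPdQ x) \<partial>Q)"
    using integrable_dPdQ integrable_sqrt_dPdQ integral_dPdQ Q.prob_space
    by simp
  also have "\<dots> = hellinger P Q"
    by (simp add: hellinger_def dPdQ_def)
  finally show ?thesis ..
qed

lemma integrable_hellinger_integrand: "integrable Q (\<lambda>x. (sqrt (dPdQ x) - 1)^2)"
  using integrable_dPdQ integrable_sqrt_dPdQ by (simp add: power2_eq_square algebra_simps)

lemma hellinger_le_KL:
  assumes "\<And>t. 0 < t \<Longrightarrow> \<bar>2 * ln t\<bar> \<le> ln R \<Longrightarrow> a * (t - 1)^2 \<le> kl_sq t"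
  shows "a * hellinger P Q \<le> KL P Q"
proof -
  have "a * hellinger P Q = (\<integral>x. a * (sqrt (dPdQ x) - 1)^2 \<partial>Q)"
    by (simp add: hellinger_eq_integral)
  also have "\<dots> \<le> (\<integral>x. kl_sq (sqrt (dPdQ x)) \<partial>Q)" (is "integral\<^sup>L Q ?f \<le> integral\<^sup>L Q ?g")
    using integrable_hellinger_integrand integrable_kl_sq_sqrt_dPdQ
  proof (intro integral_mono_AE)
    show "AE x in Q. ?f x \<le> ?g x"
      using AE_ln_dPdQ_bound by eventually_elim (auto intro!: assms simp: ln_sqrt)
  qed auto
  finally show ?thesis
    by (simp add: KL_eq_integral)
qed

lemma KL_le_hellinger:
  assumes "\<And>t. 0 < t \<Longrightarrow> \<bar>2 * ln t\<bar> \<le> ln R \<Longrightarrow> kl_sq t \<le> b * (t - 1)^2"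
  shows "KL P Q \<le> b * hellinger P Q"
proof -
  have "(\<integral>x. kl_sq (sqrt (dPdQ x)) \<partial>Q) \<le> (\<integral>x. b * (sqrt (dPdQ x) - 1)^2 \<partial>Q)"
    (is "integral\<^sup>L Q ?f \<le> integral\<^sup>L Q ?g")
    using integrable_hellinger_integrand integrable_kl_sq_sqrt_dPdQ
  proof (intro integral_mono_AE)
    show "AE x in Q. ?f x \<le> ?g x"
      using AE_ln_dPdQ_bound by eventually_elim (auto intro!: assms simp: ln_sqrt)
  qed auto
  also have "\<dots> = b * hellinger P Q"
    by (simp add: hellinger_eq_integral)
  finally show ?thesis
    by (simp add: KL_eq_integral)
qed

end

theorem fact1:
  fixes P Q :: "'a measure" and R :: real
  assumes "prob_space P" and "prob_space Q"
    and "sets P = sets Q"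
    and "absolutely_continuous Q P" and "absolutely_continuous P Q"
    and "AE x in Q. RN_deriv Q P x \<le> ennreal R"
    and "AE x in P. RN_deriv P Q x \<le> ennreal R"
  shows "max (2 - 0.5 * ln R) 1 * hellinger P Q \<le> KL P Q
         \<and> KL P Q \<le> (2 + ln R) * hellinger P Q
         \<and> (R \<le> 4.5 \<longrightarrow>
              (2 - 0.4 * ln R) * hellinger P Q \<le> KL P Q
              \<and> KL P Q \<le> (2 + 0.4 * ln R) * hellinger P Q)"
proof -
  interpret bounded_likelihood_ratio P Q R
    using assms by (simp add: bounded_likelihood_ratio_def bounded_likelihood_ratio_axioms_def)
  have small: "ln R \<le> ln (9/2)" if "R \<le> 4.5"
    using R_ge_1 that by simp
  have "max (2 - 0.5 * ln R) 1 * hellinger P Q \<le> KL P Q"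
    by (rule hellinger_le_KL) (rule kl_sq_lower_bound_max)
  moreover have "KL P Q \<le> (2 + ln R) * hellinger P Q"
    by (rule KL_le_hellinger) (rule kl_sq_upper_bound)
  moreover have "(2 - 0.4 * ln R) * hellinger P Q \<le> KL P Q"
    by (rule hellinger_le_KL) (rule kl_sq_lower_bound)
  moreover have "KL P Q \<le> (2 + 0.4 * ln R) * hellinger P Q" if "R \<le> 4.5"
    by (rule KL_le_hellinger) (rule kl_sq_upper_bound_small[OF _ _ small[OF that]])
  ultimately show ?thesis
    by blast
qed

end
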